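(* An ES combination operator $\nabla$ satisfies (ESF1)–(ESF8) if and only if there exists a unique faithful assignment $\Phi\mapsto\succeq_\Phi$ such that $[\![B(\nabla(\Phi,E))]\!]=\max([\![B(E)]\!],\succeq_\Phi)$ for every profile $\Phi$ and every $E\in\mathcal E$.
   Context: Setting: an epistemic space $(\mathcal E,B,\mathcal L_{\mathcal P})$ ($\mathcal E$ nonempty, $B:\mathcal E\to\mathcal L_{\mathcal P}$ with image modulo equivalence exactly the consistent formulas over the finite variable set $\mathcal P$; $\mathcal W_{\mathcal P}$ valuations, $[\![\phi]\!]$ models); agents form a well-ordered set $\mathcal S$; a society is a nonempty finite $N\subseteq\mathcal S$; an $N$-profile is $\Phi:N\to\mathcal E$, $E_i=\Phi(i)$, identified with $E_i$ when $N=\{i\}$; profiles on $\{i_1<\dots<i_n\}$ and $\{j_1<\dots<j_m\}$ are equivalent ($\equiv$) if $n=m$ and entries coincide position-wise; $\Phi\upharpoonright_M$ restriction; partitions $\{N_1,N_2\}$ have nonempty disjoint parts. An ES combination operator maps (profile, $E$) to $\nabla(\Phi,E)\in\mathcal E$. Postulates: (ESF1) $B(\nabla(\Phi,E))\vdash B(E)$; (ESF2) if $\Phi\equiv\Phi'$ and $B(E)\equiv B(E')$ then $B(\nabla(\Phi,E))\equiv B(\nabla(\Phi',E'))$; (ESF3) if $B(E)\equiv B(E')\wedge B(E'')$ then $B(\nabla(\Phi,E'))\wedge B(E'')\vdash B(\nabla(\Phi,E))$; (ESF4) if moreover $B(\nabla(\Phi,E'))\wedge B(E'')\nvdash\bot$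 then $B(\nabla(\Phi,E))\vdash B(\nabla(\Phi,E'))\wedge B(E'')$; (ESF5) if $E_j\ne E_k$ ($j,k$ agents) there is $E'$ with $B(\nabla(E_j,E'))\not\equiv B(\nabla(E_k,E'))$; (ESF6) if $\bigwedge_{i\in N}B(E_i)\wedge B(E)\nvdash\bot$ then $B(\nabla(\Phi,E))\equiv\bigwedge_{i\in N}B(E_i)\wedge B(E)$; (ESF7) $B(\nabla(\Phi\upharpoonright_{N_1},E))\wedge B(\nabla(\Phi\upharpoonright_{N_2},E))\vdash B(\nabla(\Phi,E))$; (ESF8) if that conjunction is consistent then $B(\nabla(\Phi,E))\vdash B(\nabla(\Phi\upharpoonright_{N_1},E))\wedge B(\nabla(\Phi\upharpoonright_{N_2},E))$. An assignment maps each profile to a total preorder $\succeq_\Phi$ on $\mathcal W_{\mathcal P}$; it is basic if $\Phi\equiv\Psi$ implies $\succeq_\Phi=\succeq_\Psi$; it is faithful if basic and: (1) $E_j\ne E_k$ implies $\succeq_{E_j}\ne\succeq_{E_k}$; (2) if $\bigwedge_{i\in N}B(E_i)\nvdash\bot$ then $[\![\bigwedge_{i\in N}B(E_i)]\!]=\max(\succeq_\Phi)$; (3) $w\succeq_{\Phi\upharpoonright_{N_1}}w'$ and $w\succeq_{\Phi\upharpoonright_{N_2}}w'$ imply $w\succeq_\Phi w'$; (4) $w\succeq_{\Phi\upharpoonright_{N_1}}w'$ and $w\succ_{\Phi\upharpoonright_{N_2}}w'$ imply $w\succ_\Phi w'$. $\max(C,\succeq)=\{c\in C:c\succeq x\ \forall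 x\in C\}$. *)

theory Defs
  imports Main
begin

text \<open>The finite set of propositional variables P is the (finite, nonempty) type 'v.
  A valuation is the set of variables it makes true; W_P = UNIV :: 'v set set.\<close>

datatype 'v form = Atom 'v | Top | Bot | Neg "'v form" | And "'v form" "'v form"
  | Or "'v form" "'v form" | Imp "'v form" "'v form"

fun sat :: "'v set \<Rightarrow> 'v form \<Rightarrow> bool" where
  "sat w (Atom p) = (p \<in> w)"
| "sat w Top = True"
| "sat w Bot = False"
| "sat w (Neg f) = (\<not> sat w f)"
| "sat w (And f g) = (sat w f \<and> sat w g)"
| "sat w (Or f g) = (sat w f \<or> sat w g)"
| "sat w (Imp f g) = (sat w f \<longrightarrow> sat w g)"

definition models :: "'v::finite form \<Rightarrow> 'v set set" where
  "models f = {w. sat w f}"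

definition entails :: "'v::finite form \<Rightarrow> 'v form \<Rightarrow> bool" (infix "\<turnstile>" 50) where
  "f \<turnstile> g \<longleftrightarrow> models f \<subseteq> models g"

definition fequiv :: "'v::finite form \<Rightarrow> 'v form \<Rightarrow> bool" (infix "\<equiv>\<^sub>F" 50) where
  "f \<equiv>\<^sub>F g \<longleftrightarrow> models f = models g"

definition consistent :: "'v::finite form \<Rightarrow> bool" where
  "consistent f \<longleftrightarrow> \<not> (f \<turnstile> Bot)"

text \<open>Epistemic states are elements of the type 'e (types are nonempty).
  B maps each epistemic state to a formula; its image modulo equivalence
  is exactly the set of consistent formulas.\<close>

definition epistemic_space :: "('e \<Rightarrow> 'v::finite form) \<Rightarrow> bool" where
  "epistemic_space B \<longleftrightarrow> (\<forall>E. consistent (B E)) \<and>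
     (\<forall>\<phi>. consistent \<phi> \<longrightarrow> (\<exists>E. B E \<equiv>\<^sub>F \<phi>))"

text \<open>Agents are elements of a well-ordered type 'a. A profile on a society N
  (nonempty finite set of agents) is a partial map with domain N.\<close>

definition is_profile :: "('a \<rightharpoonup> 'e) \<Rightarrow> bool" where
  "is_profile \<Phi> \<longleftrightarrow> finite (dom \<Phi>) \<and> dom \<Phi> \<noteq> {}"

definition entries :: "('a::wellorder \<rightharpoonup> 'e) \<Rightarrow> 'e list" where
  "entries \<Phi> = map (\<lambda>i. the (\<Phi> i)) (sorted_list_of_set (dom \<Phi>))"

definition prof_equiv :: "('a::wellorder \<rightharpoonup> 'e) \<Rightarrow> ('a \<rightharpoonup> 'e) \<Rightarrow> bool" where
  "prof_equiv \<Phi> \<Psi> \<longleftrightarrow> entries \<Phi> = entries \<Psi>"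

definition is_partition2 :: "'a set \<Rightarrow> 'a set \<Rightarrow> 'a set \<Rightarrow> bool" where
  "is_partition2 N N1 N2 \<longleftrightarrow> N1 \<noteq> {} \<and> N2 \<noteq> {} \<and> N1 \<inter> N2 = {} \<and> N1 \<union> N2 = N"

definition bigconj :: "('e \<Rightarrow> 'v::finite form) \<Rightarrow> ('a::wellorder \<rightharpoonup> 'e) \<Rightarrow> 'v form" where
  "bigconj B \<Phi> = foldr And (map B (entries \<Phi>)) Top"

type_synonym ('a, 'e) esop = "('a \<rightharpoonup> 'e) \<Rightarrow> 'e \<Rightarrow> 'e"

definition ESF1 :: "('e \<Rightarrow> 'v::finite form) \<Rightarrow> ('a::wellorder, 'e) esop \<Rightarrow> bool" where
  "ESF1 B nab \<longleftrightarrow> (\<forall>\<Phi> E. is_profile \<Phi> \<longrightarrow> B (nab \<Phi> E) \<turnstile> B E)"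

definition ESF2 :: "('e \<Rightarrow> 'v::finite form) \<Rightarrow> ('a::wellorder, 'e) esop \<Rightarrow> bool" where
  "ESF2 B nab \<longleftrightarrow> (\<forall>\<Phi> \<Phi>' E E'. is_profile \<Phi> \<longrightarrow> is_profile \<Phi>' \<longrightarrow>
     prof_equiv \<Phi> \<Phi>' \<longrightarrow> B E \<equiv>\<^sub>F B E' \<longrightarrow> B (nab \<Phi> E) \<equiv>\<^sub>F B (nab \<Phi>' E'))"

definition ESF3 :: "('e \<Rightarrow> 'v::finite form) \<Rightarrow> ('a::wellorder, 'e) esop \<Rightarrow> bool" where
  "ESF3 B nab \<longleftrightarrow> (\<forall>\<Phi> E E' E''. is_profile \<Phi> \<longrightarrow> B E \<equiv>\<^sub>F And (B E') (B E'') \<longrightarrow>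
     And (B (nab \<Phi> E')) (B E'') \<turnstile> B (nab \<Phi> E))"

definition ESF4 :: "('e \<Rightarrow> 'v::finite form) \<Rightarrow> ('a::wellorder, 'e) esop \<Rightarrow> bool" where
  "ESF4 B nab \<longleftrightarrow> (\<forall>\<Phi> E E' E''. is_profile \<Phi> \<longrightarrow> B E \<equiv>\<^sub>F And (B E') (B E'') \<longrightarrow>
     consistent (And (B (nab \<Phi> E')) (B E'')) \<longrightarrow>
     B (nab \<Phi> E) \<turnstile> And (B (nab \<Phi> E')) (B E''))"

definition ESF5 :: "('e \<Rightarrow> 'v::finite form) \<Rightarrow> ('a::wellorder, 'e) esop \<Rightarrow> bool" where
  "ESF5 B nab \<longleftrightarrow> (\<forall>(j::'a) k Ej Ek. Ej \<noteq> Ek \<longrightarrow>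
     (\<exists>E'. \<not> (B (nab [j \<mapsto> Ej] E') \<equiv>\<^sub>F B (nab [k \<mapsto> Ek] E'))))"

definition ESF6 :: "('e \<Rightarrow> 'v::finite form) \<Rightarrow> ('a::wellorder, 'e) esop \<Rightarrow> bool" where
  "ESF6 B nab \<longleftrightarrow> (\<forall>\<Phi> E. is_profile \<Phi> \<longrightarrow> consistent (And (bigconj B \<Phi>) (B E)) \<longrightarrow>
     B (nab \<Phi> E) \<equiv>\<^sub>F And (bigconj B \<Phi>) (B E))"

definition ESF7 :: "('e \<Rightarrow> 'v::finite form) \<Rightarrow> ('a::wellorder, 'e) esop \<Rightarrow> bool" where
  "ESF7 B nab \<longleftrightarrow> (\<forall>\<Phi> N1 N2 E. is_profile \<Phi> \<longrightarrow> is_partition2 (dom \<Phi>) N1 N2 \<longrightarrow>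
     And (B (nab (\<Phi> |` N1) E)) (B (nab (\<Phi> |` N2) E)) \<turnstile> B (nab \<Phi> E))"

definition ESF8 :: "('e \<Rightarrow> 'v::finite form) \<Rightarrow> ('a::wellorder, 'e) esop \<Rightarrow> bool" where
  "ESF8 B nab \<longleftrightarrow> (\<forall>\<Phi> N1 N2 E. is_profile \<Phi> \<longrightarrow> is_partition2 (dom \<Phi>) N1 N2 \<longrightarrow>
     consistent (And (B (nab (\<Phi> |` N1) E)) (B (nab (\<Phi> |` N2) E))) \<longrightarrow>
     B (nab \<Phi> E) \<turnstile> And (B (nab (\<Phi> |` N1) E)) (B (nab (\<Phi> |` N2) E)))"

definition ESF_all :: "('e \<Rightarrow> 'v::finite form) \<Rightarrow> ('a::wellorder, 'e) esop \<Rightarrow> bool" where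
  "ESF_all B nab \<longleftrightarrow> ESF1 B nab \<and> ESF2 B nab \<and> ESF3 B nab \<and> ESF4 B nab \<and>
     ESF5 B nab \<and> ESF6 B nab \<and> ESF7 B nab \<and> ESF8 B nab"

text \<open>An assignment maps each profile to a relation on valuations;
  only its values on profiles matter.\<close>
type_synonym ('a, 'e, 'v) assignment = "('a \<rightharpoonup> 'e) \<Rightarrow> 'v set \<Rightarrow> 'v set \<Rightarrow> bool"

definition total_preorder_on_W :: "('v set \<Rightarrow> 'v set \<Rightarrow> bool) \<Rightarrow> bool" where
  "total_preorder_on_W R \<longleftrightarrow> (\<forall>w. R w w) \<and> (\<forall>u v w. R u v \<longrightarrow> R v w \<longrightarrow> R u w)
     \<and> (\<forall>u v. R u v \<or> R v u)"

definition strict :: "('v set \<Rightarrow> 'v set \<Rightarrow> bool) \<Rightarrow> 'v set \<Rightarrow> 'v set \<Rightarrow> bool" where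
  "strict R u v \<longleftrightarrow> R u v \<and> \<not> R v u"

definition maxel :: "'v set set \<Rightarrow> ('v set \<Rightarrow> 'v set \<Rightarrow> bool) \<Rightarrow> 'v set set" where
  "maxel C R = {c \<in> C. \<forall>x\<in>C. R c x}"

definition is_assignment :: "('a::wellorder, 'e, 'v::finite) assignment \<Rightarrow> bool" where
  "is_assignment asg \<longleftrightarrow> (\<forall>\<Phi>. is_profile \<Phi> \<longrightarrow> total_preorder_on_W (asg \<Phi>))"

definition basic :: "('a::wellorder, 'e, 'v::finite) assignment \<Rightarrow> bool" where
  "basic asg \<longleftrightarrow> is_assignment asg \<and> (\<forall>\<Phi> \<Psi>. is_profile \<Phi> \<longrightarrow> is_profile \<Psi> \<longrightarrow>
     prof_equiv \<Phi> \<Psi> \<longrightarrow> asg \<Phi> = asg \<Psi>)"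

definition faithful :: "('e \<Rightarrow> 'v::finite form) \<Rightarrow> ('a::wellorder, 'e, 'v) assignment \<Rightarrow> bool" where
  "faithful B asg \<longleftrightarrow> basic asg
   \<and> (\<forall>(j::'a) k Ej Ek. Ej \<noteq> Ek \<longrightarrow> asg [j \<mapsto> Ej] \<noteq> asg [k \<mapsto> Ek])
   \<and> (\<forall>\<Phi>. is_profile \<Phi> \<longrightarrow> consistent (bigconj B \<Phi>) \<longrightarrow>
        models (bigconj B \<Phi>) = maxel UNIV (asg \<Phi>))
   \<and> (\<forall>\<Phi> N1 N2 w w'. is_profile \<Phi> \<longrightarrow> is_partition2 (dom \<Phi>) N1 N2 \<longrightarrow>
        asg (\<Phi> |` N1) w w' \<longrightarrow> asg (\<Phi> |` N2) w w' \<longrightarrow> asg \<Phi> w w')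
   \<and> (\<forall>\<Phi> N1 N2 w w'. is_profile \<Phi> \<longrightarrow> is_partition2 (dom \<Phi>) N1 N2 \<longrightarrow>
        asg (\<Phi> |` N1) w w' \<longrightarrow> strict (asg (\<Phi> |` N2)) w w' \<longrightarrow> strict (asg \<Phi>) w w')"

definition represents :: "('e \<Rightarrow> 'v::finite form) \<Rightarrow> ('a::wellorder, 'e) esop \<Rightarrow> ('a, 'e, 'v) assignment \<Rightarrow> bool" where
  "represents B nab asg \<longleftrightarrow> (\<forall>\<Phi> E. is_profile \<Phi> \<longrightarrow>
     models (B (nab \<Phi> E)) = maxel (models (B E)) (asg \<Phi>))"

end

theory Submission
  imports Defs
begin

text \<open>Every nonempty set of valuations is the model set of some epistemic state, so the
  operator can be probed on states with two models {w, w'}: w is ranked at least as high as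
  w' under \<Phi> iff w survives combining \<Phi> with such a state. ESF3/ESF4 say that the result
  of combination on a larger state, restricted to any smaller state it meets, is the result
  on the smaller state; this gives the max-representation and transitivity, and ESF2, ESF5,
  ESF6, ESF7, ESF8 become basicness and the faithfulness clauses (1)-(4). Conversely, a
  faithful representation satisfies the postulates, and it is unique because a reflexive
  relation is determined by its maximal elements on doubletons.\<close>

lemma models_And [simp]: "models (And f g) = models f \<inter> models g"
  by (auto simp: models_def)

lemma consistent_iff_models_nonempty: "consistent f \<longleftrightarrow> models f \<noteq> {}"
  by (auto simp: consistent_def entails_def models_def)

definition char_form :: "'v list \<Rightarrow> 'v set \<Rightarrow> 'v form" where
  "char_form ps w = foldr (\<lambda>p f. And (if p \<in> w then Atom p else Neg (Atom p)) f) ps Top"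

lemma sat_char_form: "sat u (char_form ps w) \<longleftrightarrow> (\<forall>p\<in>set ps. p \<in> u \<longleftrightarrow> p \<in> w)"
  unfolding char_form_def by (induction ps) auto

definition disj_char_forms :: "'v list \<Rightarrow> 'v set list \<Rightarrow> 'v form" where
  "disj_char_forms ps ws = foldr (\<lambda>w f. Or (char_form ps w) f) ws Bot"

lemma sat_disj_char_forms:
  "sat u (disj_char_forms ps ws) \<longleftrightarrow> (\<exists>w\<in>set ws. sat u (char_form ps w))"
  unfolding disj_char_forms_def by (induction ws) auto

lemma ex_form_models_eq: "\<exists>\<phi>::'v::finite form. models \<phi> = S"
proof -
  obtain ps :: "'v list" where ps: "set ps = UNIV"
    using finite_list[of "UNIV :: 'v set"] by auto
  obtain ws where ws: "set ws = S"
    using finite_list[of S] by auto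
  have same_valuation: "(\<forall>p. p \<in> u \<longleftrightarrow> p \<in> w) \<longleftrightarrow> u = w" for u w :: "'v set"
    by auto
  have "models (disj_char_forms ps ws) = S"
    using ps ws by (auto simp: models_def sat_disj_char_forms sat_char_form same_valuation)
  then show ?thesis by blast
qed

lemma epistemic_space_models_nonempty: "epistemic_space B \<Longrightarrow> models (B E) \<noteq> {}"
  unfolding epistemic_space_def by (simp add: consistent_iff_models_nonempty)

lemma epistemic_space_ex_state:
  assumes "epistemic_space B" "S \<noteq> {}"
  shows "\<exists>E. models (B E) = S"
proof -
  obtain \<phi> where \<phi>: "models \<phi> = S"
    using ex_form_models_eq by blast
  with assms(2) have "consistent \<phi>"
    by (simp add: consistent_iff_models_nonempty)
  then obtain E where "B E \<equiv>\<^sub>F \<phi>"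
    using assms(1) unfolding epistemic_space_def by blast
  with \<phi> show ?thesis
    by (auto simp: fequiv_def)
qed

lemma total_preorder_on_WD:
  assumes "total_preorder_on_W R"
  shows "R w w" and "R u v \<Longrightarrow> R v w \<Longrightarrow> R u w" and "R u v \<or> R v u"
  using assms unfolding total_preorder_on_W_def by blast+

lemma maxel_subset: "maxel S R \<subseteq> S"
  by (auto simp: maxel_def)

lemma maxel_doubleton_iff: "R w w \<Longrightarrow> w \<in> maxel {w, w'} R \<longleftrightarrow> R w w'"
  by (auto simp: maxel_def)

lemma maxel_subset_eq_Int:
  assumes "total_preorder_on_W R" and "T \<subseteq> S" and "maxel S R \<inter> T \<noteq> {}"
  shows "maxel T R = maxel S R \<inter> T"
proof
  show "maxel S R \<inter> T \<subseteq> maxel T R"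
    using assms(2) by (auto simp: maxel_def)
  obtain m where m: "m \<in> maxel S R" "m \<in> T"
    using assms(3) by blast
  show "maxel T R \<subseteq> maxel S R \<inter> T"
  proof
    fix w assume w: "w \<in> maxel T R"
    then have "R w m"
      using m(2) by (auto simp: maxel_def)
    with m(1) have "\<forall>x\<in>S. R w x"
      using total_preorder_on_WD(2)[OF assms(1)] by (auto simp: maxel_def)
    with w assms(2) show "w \<in> maxel S R \<inter> T"
      by (auto simp: maxel_def)
  qed
qed

lemma rel_eq_if_maxel_doubletons_eq:
  assumes "\<And>w. R w w" and "\<And>w. R' w w"
    and "\<And>w w'. maxel {w, w'} R = maxel {w, w'} R'"
  shows "R = R'"
proof (intro ext)
  fix w w'
  show "R w w' = R' w w'"
    using maxel_doubleton_iff[of R w w'] maxel_doubleton_iff[of R' w w'] assms by simp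
qed

lemma maxel_Int_subset_pareto:
  assumes "\<And>w w'. R1 w w' \<Longrightarrow> R2 w w' \<Longrightarrow> R w w'"
  shows "maxel S R1 \<inter> maxel S R2 \<subseteq> maxel S R"
  using assms by (auto simp: maxel_def)

lemma maxel_pareto_subset_Int:
  assumes tp1: "total_preorder_on_W R1" and tp2: "total_preorder_on_W R2"
    and strict12: "\<And>w w'. R1 w w' \<Longrightarrow> strict R2 w w' \<Longrightarrow> strict R w w'"
    and strict21: "\<And>w w'. R2 w w' \<Longrightarrow> strict R1 w w' \<Longrightarrow> strict R w w'"
    and common: "maxel S R1 \<inter> maxel S R2 \<noteq> {}"
  shows "maxel S R \<subseteq> maxel S R1 \<inter> maxel S R2"
proof
  fix w assume w: "w \<in> maxel S R"
  obtain m where m1: "m \<in> maxel S R1" and m2: "m \<in> maxel S R2"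
    using common by blast
  have wS: "w \<in> S" and Rwm: "R w m"
    using w m1 by (auto simp: maxel_def)
  have "R1 w m"
  proof (rule ccontr)
    assume "\<not> R1 w m"
    then have "strict R1 m w"
      using total_preorder_on_WD(3)[OF tp1] by (auto simp: strict_def)
    moreover have "R2 m w"
      using m2 wS by (auto simp: maxel_def)
    ultimately show False
      using strict21 Rwm by (auto simp: strict_def)
  qed
  moreover have "R2 w m"
  proof (rule ccontr)
    assume "\<not> R2 w m"
    then have "strict R2 m w"
      using total_preorder_on_WD(3)[OF tp2] by (auto simp: strict_def)
    moreover have "R1 m w"
      using m1 wS by (auto simp: maxel_def)
    ultimately show False
      using strict12 Rwm by (auto simp: strict_def)
  qed
  ultimately show "w \<in> maxel S R1 \<inter> maxel S R2"
    using m1 m2 wS total_preorder_on_WD(2)[OF tp1] total_preorder_on_WD(2)[OF tp2]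
    by (auto simp: maxel_def)
qed

lemma is_profile_restrict:
  assumes "is_profile \<Phi>" and "is_partition2 (dom \<Phi>) N1 N2"
  shows "is_profile (\<Phi> |` N1)" and "is_profile (\<Phi> |` N2)"
  using assms unfolding is_profile_def is_partition2_def
  by (auto simp: Int_absorb1)

lemma is_profile_singleton: "is_profile [j \<mapsto> E]"
  by (simp add: is_profile_def)

lemma is_partition2_commute: "is_partition2 N N1 N2 \<Longrightarrow> is_partition2 N N2 N1"
  by (auto simp: is_partition2_def)

lemma faithful_total_preorder:
  "faithful B asg \<Longrightarrow> is_profile \<Phi> \<Longrightarrow> total_preorder_on_W (asg \<Phi>)"
  by (simp add: faithful_def basic_def is_assignment_def)

lemma represents_unique:
  assumes es: "epistemic_space B" and p: "is_profile \<Phi>"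
    and "total_preorder_on_W (asg \<Phi>)" and "total_preorder_on_W (asg' \<Phi>)"
    and rep: "represents B nab asg" and rep': "represents B nab asg'"
  shows "asg \<Phi> = asg' \<Phi>"
proof (rule rel_eq_if_maxel_doubletons_eq)
  fix w w'
  obtain E where "models (B E) = {w, w'}"
    using epistemic_space_ex_state[OF es, of "{w, w'}"] by auto
  with rep rep' p show "maxel {w, w'} (asg \<Phi>) = maxel {w, w'} (asg' \<Phi>)"
    unfolding represents_def by metis
qed (use assms total_preorder_on_WD(1) in auto)

section \<open>Faithful representations satisfy the postulates\<close>

context
  fixes B :: "'e \<Rightarrow> 'v::finite form" and nab :: "('a::wellorder, 'e) esop"
    and asg :: "('a, 'e, 'v) assignment"
  assumes es: "epistemic_space B" and faithful: "faithful B asg"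
    and rep: "represents B nab asg"
begin

lemma models_nab_eq_maxel:
  "is_profile \<Phi> \<Longrightarrow> models (B (nab \<Phi> E)) = maxel (models (B E)) (asg \<Phi>)"
  using rep by (simp add: represents_def)

lemma ESF1_of_represents: "ESF1 B nab"
  by (simp add: ESF1_def entails_def models_nab_eq_maxel maxel_subset)

lemma ESF2_of_represents: "ESF2 B nab"
  using faithful by (simp add: ESF2_def fequiv_def models_nab_eq_maxel faithful_def basic_def)

lemma ESF3_of_represents: "ESF3 B nab"
  by (auto simp: ESF3_def entails_def fequiv_def models_nab_eq_maxel maxel_def)

lemma ESF4_of_represents: "ESF4 B nab"
  unfolding ESF4_def entails_def fequiv_def consistent_iff_models_nonempty
proof (intro allI impI)
  fix \<Phi> :: "'a \<rightharpoonup> 'e" and E E' E''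
  assume p: "is_profile \<Phi>" and eq: "models (B E) = models (And (B E') (B E''))"
    and meet: "models (And (B (nab \<Phi> E')) (B E'')) \<noteq> {}"
  have "maxel (models (B E)) (asg \<Phi>) = maxel (models (B E')) (asg \<Phi>) \<inter> models (B E)"
    using meet eq by (intro maxel_subset_eq_Int faithful_total_preorder[OF faithful p])
      (auto simp: models_nab_eq_maxel[OF p] dest: maxel_subset[THEN subsetD])
  with eq show "models (B (nab \<Phi> E)) \<subseteq> models (And (B (nab \<Phi> E')) (B E''))"
    by (auto simp: models_nab_eq_maxel[OF p])
qed

lemma ESF5_of_represents: "ESF5 B nab"
  unfolding ESF5_def
proof (intro allI impI)
  fix j k :: 'a and Ej Ek :: 'e assume "Ej \<noteq> Ek"
  then have "asg [j \<mapsto> Ej] \<noteq> asg [k \<mapsto> Ek]"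
    using faithful by (simp add: faithful_def)
  then obtain w w' where "maxel {w, w'} (asg [j \<mapsto> Ej]) \<noteq> maxel {w, w'} (asg [k \<mapsto> Ek])"
    using rel_eq_if_maxel_doubletons_eq total_preorder_on_WD(1)
      faithful_total_preorder[OF faithful is_profile_singleton] by metis
  moreover obtain E where "models (B E) = {w, w'}"
    using epistemic_space_ex_state[OF es, of "{w, w'}"] by auto
  ultimately show "\<exists>E'. \<not> B (nab [j \<mapsto> Ej] E') \<equiv>\<^sub>F B (nab [k \<mapsto> Ek] E')"
    by (metis fequiv_def models_nab_eq_maxel is_profile_singleton)
qed

lemma ESF6_of_represents: "ESF6 B nab"
  unfolding ESF6_def
proof (intro allI impI)
  fix \<Phi> :: "'a \<rightharpoonup> 'e" and E assume p: "is_profile \<Phi>" and c: "consistent (And (bigconj B \<Phi>) (B E))"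
  have top: "models (bigconj B \<Phi>) = maxel UNIV (asg \<Phi>)"
    using faithful p c by (auto simp: faithful_def consistent_iff_models_nonempty)
  have "maxel (models (B E)) (asg \<Phi>) = maxel UNIV (asg \<Phi>) \<inter> models (B E)"
    using c top by (intro maxel_subset_eq_Int faithful_total_preorder[OF faithful p])
      (auto simp: consistent_iff_models_nonempty)
  with top show "B (nab \<Phi> E) \<equiv>\<^sub>F And (bigconj B \<Phi>) (B E)"
    by (simp add: fequiv_def models_nab_eq_maxel[OF p])
qed

lemma ESF7_of_represents: "ESF7 B nab"
  unfolding ESF7_def entails_def
proof (intro allI impI)
  fix \<Phi> :: "'a \<rightharpoonup> 'e" and N1 N2 E assume p: "is_profile \<Phi>" and pt: "is_partition2 (dom \<Phi>) N1 N2"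
  have "maxel (models (B E)) (asg (\<Phi> |` N1)) \<inter> maxel (models (B E)) (asg (\<Phi> |` N2))
      \<subseteq> maxel (models (B E)) (asg \<Phi>)"
    using faithful p pt by (intro maxel_Int_subset_pareto) (auto simp: faithful_def)
  then show "models (And (B (nab (\<Phi> |` N1) E)) (B (nab (\<Phi> |` N2) E))) \<subseteq> models (B (nab \<Phi> E))"
    using is_profile_restrict[OF p pt] by (simp add: models_nab_eq_maxel p)
qed

lemma ESF8_of_represents: "ESF8 B nab"
  unfolding ESF8_def entails_def consistent_iff_models_nonempty
proof (intro allI impI)
  fix \<Phi> :: "'a \<rightharpoonup> 'e" and N1 N2 E assume p: "is_profile \<Phi>" and pt: "is_partition2 (dom \<Phi>) N1 N2"
    and meet: "models (And (B (nab (\<Phi> |` N1) E)) (B (nab (\<Phi> |` N2) E))) \<noteq> {}"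
  note p12 = is_profile_restrict[OF p pt]
  have strict: "strict (asg \<Phi>) w w'"
    if "is_partition2 (dom \<Phi>) M1 M2" "asg (\<Phi> |` M1) w w'" "strict (asg (\<Phi> |` M2)) w w'"
    for M1 M2 w w'
    using faithful p that unfolding faithful_def by blast
  have "maxel (models (B E)) (asg \<Phi>)
      \<subseteq> maxel (models (B E)) (asg (\<Phi> |` N1)) \<inter> maxel (models (B E)) (asg (\<Phi> |` N2))"
    using meet p12
    by (intro maxel_pareto_subset_Int faithful_total_preorder[OF faithful] strict[OF pt]
        strict[OF is_partition2_commute[OF pt]]) (auto simp: models_nab_eq_maxel)
  then show "models (B (nab \<Phi> E)) \<subseteq> models (And (B (nab (\<Phi> |` N1) E)) (B (nab (\<Phi> |` N2) E)))"
    using p12 by (simp add: models_nab_eq_maxel p)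
qed

lemma ESF_all_of_represents: "ESF_all B nab"
  unfolding ESF_all_def
  using ESF1_of_represents ESF2_of_represents ESF3_of_represents ESF4_of_represents
    ESF5_of_represents ESF6_of_represents ESF7_of_represents ESF8_of_represents
  by blast

end

section \<open>The assignment induced by a combination operator\<close>

definition doubleton_state :: "('e \<Rightarrow> 'v::finite form) \<Rightarrow> 'v set \<Rightarrow> 'v set \<Rightarrow> 'e" where
  "doubleton_state B w w' = (SOME E. models (B E) = {w, w'})"

definition induced_assignment ::
    "('e \<Rightarrow> 'v::finite form) \<Rightarrow> ('a::wellorder, 'e) esop \<Rightarrow> ('a, 'e, 'v) assignment" where
  "induced_assignment B nab \<Phi> w w' \<longleftrightarrow> w \<in> models (B (nab \<Phi> (doubleton_state B w w')))"

lemma models_doubleton_state: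
  assumes "epistemic_space B"
  shows "models (B (doubleton_state B w w')) = {w, w'}"
  unfolding doubleton_state_def
  using epistemic_space_ex_state[OF assms, of "{w, w'}"] by (rule someI_ex) simp

lemma doubleton_state_commute: "doubleton_state B w' w = doubleton_state B w w'"
  by (simp add: doubleton_state_def insert_commute)

context
  fixes B :: "'e \<Rightarrow> 'v::finite form" and nab :: "('a::wellorder, 'e) esop"
  assumes es: "epistemic_space B" and postulates: "ESF_all B nab"
begin

private abbreviation (input) R where "R \<equiv> induced_assignment B nab"

lemma models_nab_subset: "is_profile \<Phi> \<Longrightarrow> models (B (nab \<Phi> E)) \<subseteq> models (B E)"
  using postulates by (simp add: ESF_all_def ESF1_def entails_def)

lemma models_nab_restrict:
  assumes p: "is_profile \<Phi>" and sub: "models (B E) \<subseteq> models (B E')"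
    and meet: "models (B (nab \<Phi> E')) \<inter> models (B E) \<noteq> {}"
  shows "models (B (nab \<Phi> E)) = models (B (nab \<Phi> E')) \<inter> models (B E)"
proof -
  have eq: "B E \<equiv>\<^sub>F And (B E') (B E)"
    using sub by (auto simp: fequiv_def)
  have "And (B (nab \<Phi> E')) (B E) \<turnstile> B (nab \<Phi> E)"
    using postulates p eq unfolding ESF_all_def ESF3_def by blast
  moreover have "B (nab \<Phi> E) \<turnstile> And (B (nab \<Phi> E')) (B E)"
    using postulates p eq meet
    unfolding ESF_all_def ESF4_def by (auto simp: consistent_iff_models_nonempty)
  ultimately show ?thesis
    by (auto simp: entails_def)
qed

lemma induced_assignment_iff_mem_nab:
  assumes p: "is_profile \<Phi>" and wx: "w \<in> models (B E)" "x \<in> models (B E)"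
    and meet: "models (B (nab \<Phi> E)) \<inter> {w, x} \<noteq> {}"
  shows "R \<Phi> w x \<longleftrightarrow> w \<in> models (B (nab \<Phi> E))"
proof -
  let ?P = "doubleton_state B w x"
  have "models (B (nab \<Phi> ?P)) = models (B (nab \<Phi> E)) \<inter> {w, x}"
    using models_nab_restrict[OF p, of ?P E] models_doubleton_state[OF es] wx meet by auto
  then show ?thesis
    by (simp add: induced_assignment_def)
qed

lemma models_nab_eq_maxel_induced:
  assumes p: "is_profile \<Phi>"
  shows "models (B (nab \<Phi> E)) = maxel (models (B E)) (R \<Phi>)"
proof
  show "models (B (nab \<Phi> E)) \<subseteq> maxel (models (B E)) (R \<Phi>)"
  proof
    fix w assume w: "w \<in> models (B (nab \<Phi> E))"
    then have wE: "w \<in> models (B E)"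
      using models_nab_subset[OF p] by blast
    have "R \<Phi> w x" if "x \<in> models (B E)" for x
      using induced_assignment_iff_mem_nab[OF p wE that] w by blast
    with wE show "w \<in> maxel (models (B E)) (R \<Phi>)"
      by (simp add: maxel_def)
  qed
next
  obtain x where x: "x \<in> models (B (nab \<Phi> E))"
    using epistemic_space_models_nonempty[OF es] by blast
  then have xE: "x \<in> models (B E)"
    using models_nab_subset[OF p] by blast
  show "maxel (models (B E)) (R \<Phi>) \<subseteq> models (B (nab \<Phi> E))"
  proof
    fix w assume "w \<in> maxel (models (B E)) (R \<Phi>)"
    then have "w \<in> models (B E)" and "R \<Phi> w x"
      using xE by (auto simp: maxel_def)
    with x xE show "w \<in> models (B (nab \<Phi> E))"
      using induced_assignment_iff_mem_nab[OF p] by blast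
  qed
qed

lemma maxel_induced_nonempty:
  assumes p: "is_profile \<Phi>" and "S \<noteq> {}"
  shows "maxel S (R \<Phi>) \<noteq> {}"
proof -
  obtain E where "models (B E) = S"
    using epistemic_space_ex_state[OF es \<open>S \<noteq> {}\<close>] by blast
  then show ?thesis
    using models_nab_eq_maxel_induced[OF p, of E]
      epistemic_space_models_nonempty[OF es, of "nab \<Phi> E"] by simp
qed

lemma induced_assignment_trans:
  assumes p: "is_profile \<Phi>" and uv: "R \<Phi> u v" and vw: "R \<Phi> v w"
  shows "R \<Phi> u w"
proof -
  obtain T where T: "models (B T) = {u, v, w}"
    using epistemic_space_ex_state[OF es, of "{u, v, w}"] by blast
  let ?N = "models (B (nab \<Phi> T))"
  have N: "?N = maxel {u, v, w} (R \<Phi>)"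
    using models_nab_eq_maxel_induced[OF p, of T] T by simp
  show ?thesis
  proof (cases "?N \<inter> {u, v} = {}")
    case False
    then have "u \<in> ?N"
      using induced_assignment_iff_mem_nab[OF p, of u T v] T uv by auto
    with N show ?thesis
      by (simp add: maxel_def)
  next
    case True
    moreover have "?N \<noteq> {}" and "?N \<subseteq> {u, v, w}"
      using epistemic_space_models_nonempty[OF es] models_nab_subset[OF p, of T] T by auto
    ultimately have "w \<in> ?N" and "v \<notin> ?N"
      by auto
    then show ?thesis
      using induced_assignment_iff_mem_nab[OF p, of v T w] T vw by auto
  qed
qed

lemma total_preorder_induced:
  assumes p: "is_profile \<Phi>"
  shows "total_preorder_on_W (R \<Phi>)"
proof -
  have "R \<Phi> w w" for w
    using maxel_induced_nonempty[OF p, of "{w}"] by (auto simp: maxel_def)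
  moreover have "R \<Phi> u v \<or> R \<Phi> v u" for u v
    using maxel_induced_nonempty[OF p, of "{u, v}"] by (auto simp: maxel_def)
  ultimately show ?thesis
    using induced_assignment_trans[OF p] by (simp add: total_preorder_on_W_def)
qed

lemma represents_induced: "represents B nab R"
  by (simp add: represents_def models_nab_eq_maxel_induced)

lemma basic_induced: "basic R"
  unfolding basic_def is_assignment_def
proof (intro conjI allI impI total_preorder_induced ext)
  fix \<Phi> \<Psi> :: "'a \<rightharpoonup> 'e" and w w'
  assume "is_profile \<Phi>" "is_profile \<Psi>" "prof_equiv \<Phi> \<Psi>"
  then have "models (B (nab \<Phi> E)) = models (B (nab \<Psi> E))" for E
    using postulates unfolding ESF_all_def ESF2_def fequiv_def by blast
  then show "R \<Phi> w w' = R \<Psi> w w'"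
    by (simp add: induced_assignment_def)
qed

lemma induced_singletons_distinct:
  "Ej \<noteq> Ek \<Longrightarrow> R [j \<mapsto> Ej] \<noteq> R [k \<mapsto> Ek]"
  using postulates unfolding ESF_all_def ESF5_def fequiv_def
  by (metis models_nab_eq_maxel_induced is_profile_singleton)

lemma induced_top_eq_bigconj:
  assumes p: "is_profile \<Phi>" and c: "consistent (bigconj B \<Phi>)"
  shows "models (bigconj B \<Phi>) = maxel UNIV (R \<Phi>)"
proof -
  obtain U where U: "models (B U) = UNIV"
    using epistemic_space_ex_state[OF es, of UNIV] by blast
  with c have "consistent (And (bigconj B \<Phi>) (B U))"
    by (simp add: consistent_iff_models_nonempty)
  then have "B (nab \<Phi> U) \<equiv>\<^sub>F And (bigconj B \<Phi>) (B U)"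
    using postulates p unfolding ESF_all_def ESF6_def by blast
  with U show ?thesis
    using models_nab_eq_maxel_induced[OF p, of U] by (simp add: fequiv_def)
qed

lemma induced_pareto:
  assumes p: "is_profile \<Phi>" and pt: "is_partition2 (dom \<Phi>) N1 N2"
    and "R (\<Phi> |` N1) w w'" and "R (\<Phi> |` N2) w w'"
  shows "R \<Phi> w w'"
proof -
  let ?P = "doubleton_state B w w'"
  have "And (B (nab (\<Phi> |` N1) ?P)) (B (nab (\<Phi> |` N2) ?P)) \<turnstile> B (nab \<Phi> ?P)"
    using postulates p pt unfolding ESF_all_def ESF7_def by blast
  with assms(3,4) show ?thesis
    by (auto simp: induced_assignment_def entails_def)
qed

text \<open>The pairs (w, w') and (w', w) are probed by the same state, so strictness of the
  restricted relation means that w' is discarded there, and ESF8 passes this on to \<Phi>.\<close>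

lemma induced_strict_pareto:
  assumes p: "is_profile \<Phi>" and pt: "is_partition2 (dom \<Phi>) N1 N2"
    and w1: "R (\<Phi> |` N1) w w'" and w2: "strict (R (\<Phi> |` N2)) w w'"
  shows "strict (R \<Phi>) w w'"
proof -
  let ?P = "doubleton_state B w w'"
  have "w \<in> models (B (nab (\<Phi> |` N2) ?P))" and w'2: "w' \<notin> models (B (nab (\<Phi> |` N2) ?P))"
    using w2 by (auto simp: strict_def induced_assignment_def doubleton_state_commute)
  moreover have "w \<in> models (B (nab (\<Phi> |` N1) ?P))"
    using w1 by (simp add: induced_assignment_def)
  ultimately have "consistent (And (B (nab (\<Phi> |` N1) ?P)) (B (nab (\<Phi> |` N2) ?P)))"
    by (auto simp: consistent_iff_models_nonempty)
  then have "B (nab \<Phi> ?P) \<turnstile> And (B (nab (\<Phi> |` N1) ?P)) (B (nab (\<Phi> |` N2) ?P))"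
    using postulates p pt unfolding ESF_all_def ESF8_def by blast
  with w'2 have "\<not> R \<Phi> w' w"
    by (auto simp: entails_def induced_assignment_def doubleton_state_commute)
  moreover have "R \<Phi> w w'"
    using induced_pareto[OF p pt w1] w2 by (simp add: strict_def)
  ultimately show ?thesis
    by (simp add: strict_def)
qed

lemma faithful_induced: "faithful B R"
  unfolding faithful_def
  using basic_induced induced_singletons_distinct induced_top_eq_bigconj induced_pareto
    induced_strict_pareto
  by blast

end

theorem theorem2:
  fixes B :: "'e \<Rightarrow> 'v::finite form"
    and nab :: "('a::wellorder, 'e) esop"
  assumes "epistemic_space B"
  shows "ESF_all B nab \<longleftrightarrow>
    (\<exists>asg. faithful B asg \<and> represents B nab asg \<and>
      (\<forall>asg'. faithful B asg' \<and> represents B nab asg' \<longrightarrow>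
         (\<forall>\<Phi>. is_profile \<Phi> \<longrightarrow> asg' \<Phi> = asg \<Phi>)))"
proof
  assume postulates: "ESF_all B nab"
  then have "faithful B (induced_assignment B nab)" and "represents B nab (induced_assignment B nab)"
    using faithful_induced represents_induced assms by blast+
  with represents_unique[OF assms] faithful_total_preorder
  show "\<exists>asg. faithful B asg \<and> represents B nab asg \<and>
      (\<forall>asg'. faithful B asg' \<and> represents B nab asg' \<longrightarrow>
         (\<forall>\<Phi>. is_profile \<Phi> \<longrightarrow> asg' \<Phi> = asg \<Phi>))"
    by blast
next
  assume "\<exists>asg. faithful B asg \<and> represents B nab asg \<and>
      (\<forall>asg'. faithful B asg' \<and> represents B nab asg' \<longrightarrow>
         (\<forall>\<Phi>. is_profile \<Phi> \<longrightarrow> asg' \<Phi> = asg \<Phi>))"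
  then show "ESF_all B nab"
    using ESF_all_of_represents[OF assms] by blast
qed

end
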